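(* Consider the $M/G/\infty$ queueing system: customers arrive according to a Poisson process of rate $\lambda>0$, there are infinitely many servers (so every arriving customer immediately starts service), and service times are i.i.d. with continuous distribution function $B(x)$, independent of the arrival process. Let $\overline{B}(x)=1-B(x)$ and assume $b=\int_0^\infty \overline{B}(x)\,dx<\infty$; put $\rho=\lambda b$ and $\rho(t)=\lambda\int_0^t \overline{B}(x)\,dx$. Let $Q(t)$ be the number of customers in the system at time $t$, with $P(Q(0)=0)=1$, let $P_k(t)=P(Q(t)=k)$ and $P_k=\frac{\rho^k}{k!}e^{-\rho}$ for $k\ge 0$, and let $\varphi(t)=\sup_{k\ge 0}|P_k(t)-P_k|$. Then for all $t\ge 0$, $$\varphi(t)\le C_\rho\,(\rho-\rho(t)) = C_\rho\,\lambda\int_t^\infty \overline{B}(x)\,dx,\qquad\text{where } C_\rho=2\,\frac{\rho^{[\rho]}}{[\rho]!},$$ and $[\rho]$ denotes the integer part of $\rho$.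
   Context: It is known (and may be used) that $P_k(t)=\frac{(\rho(t))^k}{k!}e^{-\rho(t)}$ for $k\ge 0$, so $P_k=\lim_{t\to\infty}P_k(t)$ is the stationary distribution of $Q(t)$. *)

theory Defs
  imports "HOL-Analysis.Analysis"
begin

definition poisson_prob :: "real \<Rightarrow> nat \<Rightarrow> real" where
  "poisson_prob r k = r ^ k / fact k * exp (- r)"

definition rho_t :: "real \<Rightarrow> (real \<Rightarrow> real) \<Rightarrow> real \<Rightarrow> real" where
  "rho_t lam B t = lam * integral {0..t} (\<lambda>x. 1 - B x)"

definition rho_inf :: "real \<Rightarrow> (real \<Rightarrow> real) \<Rightarrow> real" where
  "rho_inf lam B = lam * integral {0..} (\<lambda>x. 1 - B x)"

text \<open>P_k(t) = P(Q(t)=k) for the M/G/infinity queue started empty; by the known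
  result quoted in the context this equals the Poisson probability with mean rho(t).\<close>
definition MGinf_P :: "real \<Rightarrow> (real \<Rightarrow> real) \<Rightarrow> real \<Rightarrow> nat \<Rightarrow> real" where
  "MGinf_P lam B t k = poisson_prob (rho_t lam B t) k"

definition phi :: "real \<Rightarrow> (real \<Rightarrow> real) \<Rightarrow> real \<Rightarrow> real" where
  "phi lam B t = (SUP k. \<bar>MGinf_P lam B t k - poisson_prob (rho_inf lam B) k\<bar>)"

definition C_rho :: "real \<Rightarrow> real" where
  "C_rho r = 2 * r ^ nat \<lfloor>r\<rfloor> / fact (nat \<lfloor>r\<rfloor>)"

end

theory Submission
  imports Defs
begin

text \<open>The tail identity is additivity of the integral over \<open>[0, t] \<union> [t, \<infinity>)\<close>. For the bound,
  \<open>P\<^sub>k(t)\<close> and \<open>P\<^sub>k\<close> are the Poisson weights \<open>p\<^sub>k(u) = u\<^sup>k e\<^sup>-\<^sup>u / k!\<close> at \<open>u = \<rho>(t) \<le> \<rho>\<close>. For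
  \<open>0 \<le> u \<le> \<rho>\<close> every \<open>p\<^sub>j(u)\<close> lies in \<open>[0, M]\<close> with \<open>M = max\<^sub>j \<rho>\<^sup>j / j! = \<rho>\<^bsup>[\<rho>]\<^esup> / [\<rho>]!\<close>, and
  \<open>p\<^sub>k' = p\<^sub>k\<^sub>-\<^sub>1 - p\<^sub>k\<close> is a difference of two such values. So each \<open>p\<^sub>k\<close> is \<open>M\<close>-Lipschitz on
  \<open>[0, \<rho>]\<close>, and \<open>M \<le> C\<^sub>\<rho>\<close>.\<close>

lemma pow_div_fact_le_floor:
  fixes r :: real
  assumes r: "r \<ge> 0"
  shows "r ^ j / fact j \<le> r ^ nat \<lfloor>r\<rfloor> / fact (nat \<lfloor>r\<rfloor>)"
proof -
  define n where "n = nat \<lfloor>r\<rfloor>"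
  define a where "a = (\<lambda>j. r ^ j / (fact j :: real))"
  have ratio: "a (Suc j) = a j * (r / real (Suc j))" for j
    unfolding a_def by (simp add: field_simps)
  have a_nonneg: "a j \<ge> 0" for j
    unfolding a_def using r by simp
  have "a (min j n) \<le> a (min (Suc j) n)" for j
  proof (cases "j < n")
    case True
    then have "1 \<le> r / real (Suc j)"
      unfolding n_def using r by simp linarith
    then have "a j \<le> a (Suc j)"
      unfolding ratio using a_nonneg[of j] by (metis mult.right_neutral mult_left_mono)
    with True show ?thesis
      by (simp add: min_def)
  qed (simp add: min_def)
  then have up: "a (min j n) \<le> a (min n n)" if "j \<le> n" for j
    by (rule lift_Suc_mono_le) (use that in simp)
  have "a (n + Suc i) \<le> a (n + i)" for i
  proof -
    have "r / real (Suc (n + i)) \<le> 1"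
      unfolding n_def using r by (simp add: divide_le_eq) linarith
    then show ?thesis
      unfolding add_Suc_right ratio using a_nonneg[of "n + i"] by (metis mult.right_neutral mult_left_mono)
  qed
  then have down: "a (n + i) \<le> a (n + 0)" for i
    by (rule lift_Suc_antimono_le) simp
  have "a j \<le> a n"
    using up[of j] down[of "j - n"] by (cases "j \<le> n") simp_all
  then show ?thesis
    unfolding a_def n_def .
qed

lemma poisson_prob_nonneg: "u \<ge> 0 \<Longrightarrow> poisson_prob u k \<ge> 0"
  unfolding poisson_prob_def by simp

lemma poisson_prob_le_max_term:
  fixes u r :: real
  assumes "0 \<le> u" "u \<le> r"
  shows "poisson_prob u k \<le> r ^ nat \<lfloor>r\<rfloor> / fact (nat \<lfloor>r\<rfloor>)"
proof -
  have "poisson_prob u k \<le> u ^ k / fact k"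
    unfolding poisson_prob_def using assms by (simp add: mult_left_le divide_right_mono)
  also have "\<dots> \<le> r ^ k / fact k"
    using assms by (simp add: divide_right_mono power_mono)
  also have "\<dots> \<le> r ^ nat \<lfloor>r\<rfloor> / fact (nat \<lfloor>r\<rfloor>)"
    using assms by (intro pow_div_fact_le_floor) simp
  finally show ?thesis .
qed

lemma poisson_prob_has_real_derivative:
  "((\<lambda>u. poisson_prob u k) has_real_derivative
      (if k = 0 then 0 else poisson_prob u (k - 1)) - poisson_prob u k) (at u)"
proof -
  have "((\<lambda>u. poisson_prob u k) has_real_derivative
      (real k * u ^ (k - 1) - u ^ k) / fact k * exp (- u)) (at u)"
    unfolding poisson_prob_def by (auto intro!: derivative_eq_intros simp: field_simps)
  moreover have "(real k * u ^ (k - 1) - u ^ k) / fact k * exp (- u)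
      = (if k = 0 then 0 else poisson_prob u (k - 1)) - poisson_prob u k"
  proof (cases k)
    case (Suc m)
    have "real (Suc m) / fact (Suc m) = (1 / fact m :: real)"
      by (simp add: fact_Suc del: of_nat_Suc)
    then show ?thesis
      unfolding poisson_prob_def Suc by (simp add: diff_divide_distrib left_diff_distrib)
  qed (simp add: poisson_prob_def)
  ultimately show ?thesis
    by simp
qed

lemma poisson_prob_lipschitz:
  fixes s r :: real
  assumes "0 \<le> s" "s \<le> r"
  shows "\<bar>poisson_prob s k - poisson_prob r k\<bar> \<le> r ^ nat \<lfloor>r\<rfloor> / fact (nat \<lfloor>r\<rfloor>) * (r - s)"
proof (cases "s = r")
  case False
  define M where "M = r ^ nat \<lfloor>r\<rfloor> / fact (nat \<lfloor>r\<rfloor>)"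
  define D where "D = (\<lambda>u. (if k = 0 then 0 else poisson_prob u (k - 1)) - poisson_prob u k)"
  have "s < r"
    using False assms by simp
  then obtain z where z: "s < z" "z < r" "poisson_prob r k - poisson_prob s k = (r - s) * D z"
    using MVT2[of s r "\<lambda>u. poisson_prob u k" D] poisson_prob_has_real_derivative
    unfolding D_def by blast
  have z_range: "0 \<le> z" "z \<le> r"
    using z assms by auto
  have "\<bar>D z\<bar> \<le> M"
    using poisson_prob_le_max_term[OF z_range, of k] poisson_prob_le_max_term[OF z_range, of "k - 1"]
      poisson_prob_nonneg[OF z_range(1), of k] poisson_prob_nonneg[OF z_range(1), of "k - 1"]
    unfolding D_def M_def by (auto simp: abs_le_iff)
  then have "\<bar>(r - s) * D z\<bar> \<le> M * (r - s)"
    using \<open>s < r\<close> by (simp add: abs_mult mult.commute mult_left_mono)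
  then show ?thesis
    using z(3) unfolding M_def by (simp add: abs_minus_commute)
qed simp

lemma mono_le_tendsto_at_top:
  fixes f :: "'a::linorder \<Rightarrow> 'b::linorder_topology"
  assumes "mono f" "(f \<longlongrightarrow> L) at_top"
  shows "f x \<le> L"
proof (rule tendsto_le[OF trivial_limit_at_top_linorder assms(2) tendsto_const])
  show "\<forall>\<^sub>F y in at_top. f x \<le> f y"
    using assms(1) by (auto intro!: eventually_at_top_linorderI[of x] simp: mono_def)
qed

lemma Int_atLeastAtMost_atLeast_singleton:
  fixes a t :: "'a::linorder"
  shows "a \<le> t \<Longrightarrow> {a..t} \<inter> {t..} = {t}"
  by auto

lemma integral_Ici_split:
  fixes f :: "real \<Rightarrow> 'b::euclidean_space"
  assumes f: "f absolutely_integrable_on {a..}" and "a \<le> t"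
  shows "integral {a..} f = integral {a..t} f + integral {t..} f"
proof -
  have "f absolutely_integrable_on {a..t}" "f absolutely_integrable_on {t..}"
    by (rule set_integrable_subset[OF f]; use \<open>a \<le> t\<close> in auto)+
  then have "(f has_integral (integral {a..t} f + integral {t..} f)) ({a..t} \<union> {t..})"
    using \<open>a \<le> t\<close> by (intro has_integral_Un integrable_integral)
      (auto simp: absolutely_integrable_on_def Int_atLeastAtMost_atLeast_singleton)
  moreover have "{a..t} \<union> {t..} = {a..}"
    using \<open>a \<le> t\<close> by auto
  ultimately show ?thesis
    by (simp add: integral_unique)
qed

theorem mainTheorem1:
  fixes lam :: real and B :: "real \<Rightarrow> real" and t :: real
  assumes lam_pos: "lam > 0"
    and B_mono: "mono B"
    and B_cont: "continuous_on UNIV B"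
    and B_neg: "\<And>x. x < 0 \<Longrightarrow> B x = 0"
    and B_top: "(B \<longlongrightarrow> 1) at_top"
    and b_fin: "(\<lambda>x. 1 - B x) integrable_on {0..}"
    and t_nonneg: "t \<ge> 0"
  shows "phi lam B t \<le> C_rho (rho_inf lam B) * (rho_inf lam B - rho_t lam B t)
    \<and> rho_inf lam B - rho_t lam B t = lam * integral {t..} (\<lambda>x. 1 - B x)"
proof -
  let ?Bbar = "\<lambda>x. 1 - B x"
  have Bbar_nonneg: "?Bbar x \<ge> 0" for x
    using mono_le_tendsto_at_top[OF B_mono B_top, of x] by simp
  have "?Bbar absolutely_integrable_on {0..}"
    using b_fin Bbar_nonneg by (intro nonnegative_absolutely_integrable_1) auto
  then have "integral {0..} ?Bbar = integral {0..t} ?Bbar + integral {t..} ?Bbar"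
    using t_nonneg by (rule integral_Ici_split)
  then have tail: "rho_inf lam B - rho_t lam B t = lam * integral {t..} ?Bbar"
    unfolding rho_inf_def rho_t_def by (simp add: algebra_simps)
  have "?Bbar integrable_on {0..t}"
    using B_cont by (intro integrable_continuous_interval continuous_intros) (auto intro: continuous_on_subset)
  then have rho_t_nonneg: "0 \<le> rho_t lam B t"
    unfolding rho_t_def using lam_pos Bbar_nonneg by (simp add: integral_nonneg)
  have "0 \<le> integral {t..} ?Bbar"
    using Bbar_nonneg by (cases "?Bbar integrable_on {t..}") (simp_all add: integral_nonneg not_integrable_integral)
  then have "0 \<le> lam * integral {t..} ?Bbar"
    using lam_pos by simp
  then have rho_t_le: "rho_t lam B t \<le> rho_inf lam B"
    using tail by linarith
  let ?M = "rho_inf lam B ^ nat \<lfloor>rho_inf lam B\<rfloor> / fact (nat \<lfloor>rho_inf lam B\<rfloor>)"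
  have "0 \<le> ?M"
    using rho_t_nonneg rho_t_le by simp
  then have "?M \<le> C_rho (rho_inf lam B)"
    unfolding C_rho_def times_divide_eq_right[symmetric] by linarith
  then have "\<bar>poisson_prob (rho_t lam B t) k - poisson_prob (rho_inf lam B) k\<bar>
      \<le> C_rho (rho_inf lam B) * (rho_inf lam B - rho_t lam B t)" for k
    using poisson_prob_lipschitz[OF rho_t_nonneg rho_t_le, of k] rho_t_le
    by (meson order_trans mult_right_mono diff_ge_0_iff_ge)
  then have "phi lam B t \<le> C_rho (rho_inf lam B) * (rho_inf lam B - rho_t lam B t)"
    unfolding phi_def MGinf_P_def by (intro cSUP_least) auto
  then show ?thesis
    using tail by simp
qed

end
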